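(* Let $X,Y$ be Banach spaces and let $Z$ be a $1$-complemented subspace of $Y$. If $\mathrm{INA}_\pi(X\widehat{\otimes}_\pi Y)=X\widehat{\otimes}_\pi Y$, then $\mathrm{INA}_\pi(X\widehat{\otimes}_\pi Z)=X\widehat{\otimes}_\pi Z$.
   Context: A subspace $Z\subseteq Y$ is $1$-complemented if there is a bounded linear projection $P:Y\to Z$ with $\|P\|=1$. Definition: $u\in X\widehat{\otimes}_\pi Y$ is an integral projective norm-attaining tensor, written $u\in\mathrm{INA}_\pi(X\widehat{\otimes}_\pi Y)$, if there is a finite positive Borel measure $\mu$ on $B_X\times B_Y$ (norm topology) such that $\varphi:B_X\times B_Y\to X\widehat{\otimes}_\pi Y$, $\varphi(x,y)=x\otimes y$, is $\mu$-Bochner integrable, $u=\int_{B_X\times B_Y}x\otimes y\,d\mu(x,y)$ (Bochner integral) and $\|\mu\|=\|u\|_\pi$; then $u$ is said to be witnessed by $\mu$. *)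

theory Defs
  imports "HOL-Analysis.Analysis"
begin

text \<open>The library's has_bochner_integral requires
second countability of the target, so we use the standard definition:
approximation (a.e. pointwise and in L1-norm) by simple integrable functions.\<close>

definition gen_has_bochner_integral ::
  "'m measure \<Rightarrow> ('m \<Rightarrow> 'v::banach) \<Rightarrow> 'v \<Rightarrow> bool" where
  "gen_has_bochner_integral M f I \<longleftrightarrow>
     (\<exists>s :: nat \<Rightarrow> 'm \<Rightarrow> 'v.
        (\<forall>i. Bochner_Integration.simple_bochner_integrable M (s i)) \<and>
        (AE \<omega> in M. (\<lambda>i. s i \<omega>) \<longlonglongrightarrow> f \<omega>) \<and>
        (\<forall>i. (\<lambda>\<omega>. norm (f \<omega> - s i \<omega>)) \<in> borel_measurable M) \<and>
        (\<lambda>i. \<integral>\<^sup>+\<omega>. ennreal (norm (f \<omega> - s i \<omega>)) \<partial>M) \<longlonglongrightarrow> 0 \<and>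
        (\<lambda>i. Bochner_Integration.simple_bochner_integral M (s i)) \<longlonglongrightarrow> I)"

text \<open>This determines T up to isometric isomorphism as the completion of the algebraic
tensor product under the projective norm.\<close>

definition is_proj_tensor :: "('a::banach \<Rightarrow> 'b::banach \<Rightarrow> 't::banach) \<Rightarrow> bool" where
  "is_proj_tensor tp \<longleftrightarrow>
     bounded_bilinear tp \<and>
     (\<forall>x y. norm (tp x y) \<le> norm x * norm y) \<and>
     closure (span (range (\<lambda>(x, y). tp x y))) = UNIV \<and>
     (\<forall>B :: 'a \<Rightarrow> 'b \<Rightarrow> real. bounded_bilinear B \<longrightarrow>
        (\<exists>f :: 't \<Rightarrow> real. bounded_linear f \<and> (\<forall>x y. f (tp x y) = B x y) \<and>
           (\<forall>K. (\<forall>x y. \<bar>B x y\<bar> \<le> K * norm x * norm y) \<longrightarrow> onorm f \<le> K)))"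

definition INA_pi :: "('a::banach \<Rightarrow> 'b::banach \<Rightarrow> 't::banach) \<Rightarrow> 't \<Rightarrow> bool" where
  "INA_pi tp u \<longleftrightarrow>
     (\<exists>\<mu> :: ('a \<times> 'b) measure.
        space \<mu> = cball 0 1 \<times> cball 0 1 \<and>
        sets \<mu> = sets (restrict_space borel (cball 0 1 \<times> cball 0 1)) \<and>
        finite_measure \<mu> \<and>
        gen_has_bochner_integral \<mu> (\<lambda>(x, y). tp x y) u \<and>
        measure \<mu> (space \<mu>) = norm u)"

end

theory Submission
  imports Defs
begin

text \<open>Let P be the norm-one projection onto Z and J the isometric inclusion. The
universal property of the projective tensor product, combined with Hahn-Banach to pass
from scalar to vector-valued bilinear maps, yields contractions id \<otimes> P and id \<otimes> J
between X \<otimes> Y and X \<otimes> Z with (id \<otimes> P)(id \<otimes> J) = id. For u in X \<otimes> Z the tensor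
v = (id \<otimes> J) u therefore has the same norm as u. If \<mu> witnesses v, its image under
(x, y) \<mapsto> (x, P y) has the same total mass and, pushing the Bochner integral forward,
integrates x \<otimes> z to (id \<otimes> P) v = u.\<close>

section \<open>Norming functionals\<close>

text \<open>Partial linear functionals are encoded by their graphs, so that a chain of
extensions is bounded by its union.\<close>

definition norm_dominated_graph :: "'v::real_normed_vector \<Rightarrow> ('v \<times> real) set \<Rightarrow> bool" where
  "norm_dominated_graph w G \<longleftrightarrow> (w, norm w) \<in> G \<and>
     (\<forall>x a b. (x, a) \<in> G \<longrightarrow> (x, b) \<in> G \<longrightarrow> a = b) \<and>
     (\<forall>x a y b. (x, a) \<in> G \<longrightarrow> (y, b) \<in> G \<longrightarrow> (x + y, a + b) \<in> G) \<and>
     (\<forall>x a c. (x, a) \<in> G \<longrightarrow> (c *\<^sub>R x, c * a) \<in> G) \<and>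
     (\<forall>x a. (x, a) \<in> G \<longrightarrow> a \<le> norm x)"

lemma norm_dominated_graphD:
  assumes "norm_dominated_graph w G"
  shows "(w, norm w) \<in> G"
    and "(x, a) \<in> G \<Longrightarrow> (x, b) \<in> G \<Longrightarrow> a = b"
    and "(x, a) \<in> G \<Longrightarrow> (y, b) \<in> G \<Longrightarrow> (x + y, a + b) \<in> G"
    and "(x, a) \<in> G \<Longrightarrow> (c *\<^sub>R x, c * a) \<in> G"
    and "(x, a) \<in> G \<Longrightarrow> a \<le> norm x"
  using assms unfolding norm_dominated_graph_def by blast+

lemma norm_dominated_graph_line: "norm_dominated_graph w (range (\<lambda>c. (c *\<^sub>R w, c * norm w)))"
  unfolding norm_dominated_graph_def
proof (intro conjI allI impI)
  show "(w, norm w) \<in> range (\<lambda>c. (c *\<^sub>R w, c * norm w))"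
    by (rule image_eqI[of _ _ 1]) auto
next
  fix x a b
  assume "(x, a) \<in> range (\<lambda>c. (c *\<^sub>R w, c * norm w))" "(x, b) \<in> range (\<lambda>c. (c *\<^sub>R w, c * norm w))"
  then obtain c d where "x = c *\<^sub>R w" "a = c * norm w" "x = d *\<^sub>R w" "b = d * norm w"
    by blast
  then show "a = b"
    by (metis mult_eq_0_iff norm_eq_zero scaleR_cancel_right)
next
  fix x a y b
  assume "(x, a) \<in> range (\<lambda>c. (c *\<^sub>R w, c * norm w))" "(y, b) \<in> range (\<lambda>c. (c *\<^sub>R w, c * norm w))"
  then obtain c d where "x = c *\<^sub>R w" "a = c * norm w" "y = d *\<^sub>R w" "b = d * norm w"
    by blast
  then show "(x + y, a + b) \<in> range (\<lambda>c. (c *\<^sub>R w, c * norm w))"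
    by (intro image_eqI[of _ _ "c + d"]) (auto simp: scaleR_add_left distrib_right)
next
  fix x a e
  assume "(x, a) \<in> range (\<lambda>c. (c *\<^sub>R w, c * norm w))"
  then show "(e *\<^sub>R x, e * a) \<in> range (\<lambda>c. (c *\<^sub>R w, c * norm w))"
    by (auto intro: image_eqI[of _ _ "e * _"])
next
  fix x a
  assume "(x, a) \<in> range (\<lambda>c. (c *\<^sub>R w, c * norm w))"
  then show "a \<le> norm x"
    by (auto intro!: mult_right_mono)
qed

lemma norm_dominated_graph_Union:
  assumes "C \<in> chains {G. norm_dominated_graph w G}" and "C \<noteq> {}"
  shows "norm_dominated_graph w (\<Union>C)"
proof -
  have graphs: "norm_dominated_graph w G" if "G \<in> C" for G
    using assms(1) that unfolding chains_def by blast
  have common: "\<exists>G\<in>C. p \<in> G \<and> q \<in> G" if "p \<in> \<Union>C" "q \<in> \<Union>C" for p q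
    using assms(1) that unfolding chains_def chain_subset_def by blast
  obtain G0 where "G0 \<in> C"
    using assms(2) by blast
  show ?thesis
    unfolding norm_dominated_graph_def
  proof (intro conjI allI impI)
    show "(w, norm w) \<in> \<Union>C"
      using \<open>G0 \<in> C\<close> graphs norm_dominated_graphD(1) by blast
  next
    fix x a b assume "(x, a) \<in> \<Union>C" "(x, b) \<in> \<Union>C"
    then show "a = b"
      using common graphs norm_dominated_graphD(2) by metis
  next
    fix x a y b assume "(x, a) \<in> \<Union>C" "(y, b) \<in> \<Union>C"
    then show "(x + y, a + b) \<in> \<Union>C"
      using common graphs norm_dominated_graphD(3) by (metis UnionI)
  next
    fix x a c assume "(x, a) \<in> \<Union>C"
    then show "(c *\<^sub>R x, c * a) \<in> \<Union>C"
      using graphs norm_dominated_graphD(4) by blast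
  next
    fix x a assume "(x, a) \<in> \<Union>C"
    then show "a \<le> norm x"
      using graphs norm_dominated_graphD(5) by blast
  qed
qed

lemma norm_dominated_graph_extension_constant:
  assumes G: "norm_dominated_graph w G"
  obtains c where "\<And>s a. (s, a) \<in> G \<Longrightarrow> a - norm (s - x0) \<le> c"
    and "\<And>s a. (s, a) \<in> G \<Longrightarrow> c \<le> norm (s + x0) - a"
proof -
  have separated: "a - norm (s - x0) \<le> norm (s' + x0) - a'"
    if "(s, a) \<in> G" "(s', a') \<in> G" for s a s' a'
  proof -
    have "a + a' \<le> norm (s + s')"
      using norm_dominated_graphD(3,5)[OF G] that by blast
    also have "\<dots> \<le> norm (s - x0) + norm (s' + x0)"
      using norm_triangle_ineq[of "s - x0" "s' + x0"] by simp
    finally show ?thesis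
      by simp
  qed
  define L where "L = (\<lambda>(s, a). a - norm (s - x0)) ` G"
  have "L \<noteq> {}" and "bdd_above L"
    using norm_dominated_graphD(1)[OF G] separated unfolding L_def bdd_above_def by fast+
  then show thesis
    using separated by (intro that[of "Sup L"]) (auto simp: L_def intro!: cSup_upper cSup_least)
qed

lemma norm_dominated_graph_extension_le:
  assumes G: "norm_dominated_graph w G" and sa: "(s, a) \<in> G"
    and lower: "\<And>s a. (s, a) \<in> G \<Longrightarrow> a - norm (s - x0) \<le> c"
    and upper: "\<And>s a. (s, a) \<in> G \<Longrightarrow> c \<le> norm (s + x0) - a"
  shows "a + t * c \<le> norm (s + t *\<^sub>R x0)"
proof (cases t "0::real" rule: linorder_cases)
  case equal
  then show ?thesis
    using norm_dominated_graphD(5)[OF G sa] by simp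
next
  case less
  have "norm (s + t *\<^sub>R x0) = norm (t *\<^sub>R ((1 / t) *\<^sub>R s + x0))"
    using less by (simp add: scaleR_add_right)
  also have "\<dots> = - t * norm ((1 / t) *\<^sub>R s + x0)"
    using less by simp
  finally have "norm (s + t *\<^sub>R x0) = - t * norm ((1 / t) *\<^sub>R s + x0)" .
  moreover have "- (1 / t) * a - norm ((- (1 / t)) *\<^sub>R s - x0) \<le> c"
    using lower norm_dominated_graphD(4)[OF G sa] by blast
  ultimately show ?thesis
    using less by (simp add: norm_minus_commute[of "- _"] field_simps)
next
  case greater
  have "norm (s + t *\<^sub>R x0) = norm (t *\<^sub>R ((1 / t) *\<^sub>R s + x0))"
    using greater by (simp add: scaleR_add_right)
  also have "\<dots> = t * norm ((1 / t) *\<^sub>R s + x0)"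
    using greater by simp
  finally have "norm (s + t *\<^sub>R x0) = t * norm ((1 / t) *\<^sub>R s + x0)" .
  moreover have "c \<le> norm ((1 / t) *\<^sub>R s + x0) - (1 / t) * a"
    using upper norm_dominated_graphD(4)[OF G sa] by blast
  ultimately show ?thesis
    using greater by (simp add: field_simps)
qed

definition graph_extension :: "('v::real_vector \<times> real) set \<Rightarrow> 'v \<Rightarrow> real \<Rightarrow> ('v \<times> real) set" where
  "graph_extension G x0 c = {(s + t *\<^sub>R x0, a + t * c) | s a t. (s, a) \<in> G}"

lemma graph_extension_decomposition_unique:
  assumes G: "norm_dominated_graph w G" and x0: "x0 \<notin> fst ` G"
    and "(s, a) \<in> G" "(s', a') \<in> G" and eq: "s + t *\<^sub>R x0 = s' + t' *\<^sub>R x0"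
  shows "s = s' \<and> t = t'"
proof (rule ccontr)
  assume "\<not> (s = s' \<and> t = t')"
  with eq have "t \<noteq> t'"
    by auto
  have "(s + (-1) *\<^sub>R s', a + (-1) * a') \<in> G"
    using norm_dominated_graphD(3,4)[OF G] assms(3,4) by blast
  then have "((1 / (t' - t)) *\<^sub>R (s - s'), (1 / (t' - t)) * (a - a')) \<in> G"
    using norm_dominated_graphD(4)[OF G] by fastforce
  moreover have "s - s' = (t' - t) *\<^sub>R x0"
    using eq by (simp add: algebra_simps)
  ultimately have "(x0, (1 / (t' - t)) * (a - a')) \<in> G"
    using \<open>t \<noteq> t'\<close> by simp
  with x0 show False
    by force
qed

lemma norm_dominated_graph_extension:
  assumes G: "norm_dominated_graph w G" and x0: "x0 \<notin> fst ` G"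
    and lower: "\<And>s a. (s, a) \<in> G \<Longrightarrow> a - norm (s - x0) \<le> c"
    and upper: "\<And>s a. (s, a) \<in> G \<Longrightarrow> c \<le> norm (s + x0) - a"
  shows "norm_dominated_graph w (graph_extension G x0 c)"
  unfolding norm_dominated_graph_def
proof (intro conjI allI impI)
  show "(w, norm w) \<in> graph_extension G x0 c"
    unfolding graph_extension_def using norm_dominated_graphD(1)[OF G] by force
next
  fix x a b assume "(x, a) \<in> graph_extension G x0 c" "(x, b) \<in> graph_extension G x0 c"
  then obtain s1 a1 t1 s2 a2 t2 where "(s1, a1) \<in> G" "(s2, a2) \<in> G"
    and "x = s1 + t1 *\<^sub>R x0" "a = a1 + t1 * c" "x = s2 + t2 *\<^sub>R x0" "b = a2 + t2 * c"
    unfolding graph_extension_def by blast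
  moreover from this have "s1 = s2 \<and> t1 = t2"
    using graph_extension_decomposition_unique[OF G x0] by metis
  ultimately show "a = b"
    using norm_dominated_graphD(2)[OF G] by blast
next
  fix x a y b assume "(x, a) \<in> graph_extension G x0 c" "(y, b) \<in> graph_extension G x0 c"
  then obtain s1 a1 t1 s2 a2 t2 where "(s1, a1) \<in> G" "(s2, a2) \<in> G"
    and "x = s1 + t1 *\<^sub>R x0" "a = a1 + t1 * c" "y = s2 + t2 *\<^sub>R x0" "b = a2 + t2 * c"
    unfolding graph_extension_def by blast
  then show "(x + y, a + b) \<in> graph_extension G x0 c"
    unfolding graph_extension_def using norm_dominated_graphD(3)[OF G]
    by (intro CollectI exI[of _ "s1 + s2"] exI[of _ "a1 + a2"] exI[of _ "t1 + t2"])
       (auto simp: algebra_simps)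
next
  fix x a e assume "(x, a) \<in> graph_extension G x0 c"
  then obtain s a1 t where "(s, a1) \<in> G" "x = s + t *\<^sub>R x0" "a = a1 + t * c"
    unfolding graph_extension_def by blast
  then show "(e *\<^sub>R x, e * a) \<in> graph_extension G x0 c"
    unfolding graph_extension_def using norm_dominated_graphD(4)[OF G]
    by (intro CollectI exI[of _ "e *\<^sub>R s"] exI[of _ "e * a1"] exI[of _ "e * t"])
       (auto simp: algebra_simps)
next
  fix x a assume "(x, a) \<in> graph_extension G x0 c"
  then show "a \<le> norm x"
    unfolding graph_extension_def using norm_dominated_graph_extension_le[OF G _ lower upper] by blast
qed

lemma norm_dominated_graph_extend:
  assumes G: "norm_dominated_graph w G" and x0: "x0 \<notin> fst ` G"
  shows "\<exists>G'. norm_dominated_graph w G' \<and> G \<subset> G'"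
proof -
  obtain c where lower: "\<And>s a. (s, a) \<in> G \<Longrightarrow> a - norm (s - x0) \<le> c"
    and upper: "\<And>s a. (s, a) \<in> G \<Longrightarrow> c \<le> norm (s + x0) - a"
    using norm_dominated_graph_extension_constant[OF G] by blast
  have "(0, 0) \<in> G"
    using norm_dominated_graphD(4)[OF G norm_dominated_graphD(1)[OF G], of 0] by simp
  then have "(x0, c) \<in> graph_extension G x0 c - G"
    unfolding graph_extension_def using x0 by force
  moreover have "G \<subseteq> graph_extension G x0 c"
    unfolding graph_extension_def by force
  ultimately show ?thesis
    using norm_dominated_graph_extension[OF G x0 lower upper] by blast
qed

theorem hahn_banach_norming_functional:
  fixes w :: "'v::real_normed_vector"
  obtains f where "linear f" "\<And>x. \<bar>f x\<bar> \<le> norm x" "f w = norm w"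
proof -
  have "\<exists>U\<in>{G. norm_dominated_graph w G}. \<forall>X\<in>C. X \<subseteq> U"
    if "C \<in> chains {G. norm_dominated_graph w G}" for C
  proof (cases "C = {}")
    case True
    then show ?thesis
      using norm_dominated_graph_line by blast
  next
    case False
    then show ?thesis
      using norm_dominated_graph_Union[OF that] by blast
  qed
  then obtain G where G: "norm_dominated_graph w G"
    and maximal: "\<And>G'. norm_dominated_graph w G' \<Longrightarrow> G \<subseteq> G' \<Longrightarrow> G' = G"
    using Zorn_Lemma2[of "{G. norm_dominated_graph w G}"] by force
  have total: "x \<in> fst ` G" for x
    using norm_dominated_graph_extend[OF G, of x] maximal by blast
  define f where "f x = (THE a. (x, a) \<in> G)" for x
  have f_eq: "f x = a" if "(x, a) \<in> G" for x a
    unfolding f_def using that norm_dominated_graphD(2)[OF G] by blast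
  have graph: "(x, f x) \<in> G" for x
    using total[of x] f_eq by force
  have "linear f"
  proof
    show "f (x + y) = f x + f y" for x y
      by (intro f_eq norm_dominated_graphD(3)[OF G] graph)
    show "f (c *\<^sub>R x) = c *\<^sub>R f x" for c x
      using f_eq norm_dominated_graphD(4)[OF G graph] by simp
  qed
  moreover have "\<bar>f x\<bar> \<le> norm x" for x
    using norm_dominated_graphD(5)[OF G graph, of x] norm_dominated_graphD(5)[OF G graph, of "- x"]
      linear_neg[OF \<open>linear f\<close>, of x] by simp
  moreover have "f w = norm w"
    using f_eq norm_dominated_graphD(1)[OF G] .
  ultimately show thesis
    using that by blast
qed

section \<open>Maps between projective tensor products\<close>

text \<open>Scalars can be absorbed into the first factor (pair_sum_scaleR_left), so finite sums
of elementary tensors already exhaust the span of the elementary tensors.\<close>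

definition pair_sum :: "('a \<Rightarrow> 'b \<Rightarrow> 'v::real_vector) \<Rightarrow> ('a \<times> 'b) list \<Rightarrow> 'v" where
  "pair_sum B ps = (\<Sum>(x, y)\<leftarrow>ps. B x y)"

lemma pair_sum_simps [simp]:
  "pair_sum B [] = 0"
  "pair_sum B ((x, y) # ps) = B x y + pair_sum B ps"
  "pair_sum B (ps @ qs) = pair_sum B ps + pair_sum B qs"
  by (simp_all add: pair_sum_def)

lemma pair_sum_scaleR_left:
  assumes "bounded_bilinear B"
  shows "pair_sum B (map (\<lambda>(x, y). (c *\<^sub>R x, y)) ps) = c *\<^sub>R pair_sum B ps"
  by (induction ps) (auto simp: bounded_bilinear.scaleR_left[OF assms] scaleR_add_right)

lemma linear_pair_sum:
  assumes "linear f"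
  shows "f (pair_sum B ps) = pair_sum (\<lambda>x y. f (B x y)) ps"
  by (induction ps) (auto simp: linear_0[OF assms] linear_add[OF assms])

lemma subspace_range_pair_sum:
  assumes "bounded_bilinear t"
  shows "subspace (range (pair_sum t))"
  unfolding subspace_def
proof (intro conjI ballI allI)
  show "0 \<in> range (pair_sum t)"
    using pair_sum_simps(1)[of t] by (metis rangeI)
  show "a + b \<in> range (pair_sum t)" if "a \<in> range (pair_sum t)" "b \<in> range (pair_sum t)" for a b
    using that by (auto simp flip: pair_sum_simps(3))
  show "c *\<^sub>R a \<in> range (pair_sum t)" if "a \<in> range (pair_sum t)" for c a
    using that by (auto simp flip: pair_sum_scaleR_left[OF assms])
qed

lemma proj_tensor_closure_range_pair_sum:
  assumes "is_proj_tensor t"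
  shows "closure (range (pair_sum t)) = UNIV"
proof -
  have t_bilinear: "bounded_bilinear t" and dense: "closure (span (range (\<lambda>(x, y). t x y))) = UNIV"
    using assms unfolding is_proj_tensor_def by blast+
  have "range (\<lambda>(x, y). t x y) \<subseteq> range (pair_sum t)"
  proof
    fix w assume "w \<in> range (\<lambda>(x, y). t x y)"
    then obtain x y where "w = pair_sum t [(x, y)]"
      by auto
    then show "w \<in> range (pair_sum t)"
      by blast
  qed
  moreover have "subspace (range (pair_sum t))"
    by (rule subspace_range_pair_sum[OF t_bilinear])
  ultimately have "span (range (\<lambda>(x, y). t x y)) \<subseteq> range (pair_sum t)"
    by (rule span_minimal)
  then show ?thesis
    using dense closure_mono by blast
qed

lemma bounded_bilinear_compose_linear:
  assumes f: "bounded_linear f" and B: "bounded_bilinear B"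
  shows "bounded_bilinear (\<lambda>x y. f (B x y))"
proof -
  interpret f: bounded_linear f by fact
  interpret B: bounded_bilinear B by fact
  obtain K where K0: "K \<ge> 0" and K: "\<And>x. norm (f x) \<le> norm x * K"
    using f.nonneg_bounded by blast
  obtain L where L: "\<And>a b. norm (B a b) \<le> norm a * norm b * L"
    using B.bounded by blast
  show ?thesis
  proof
    have "norm (f (B a b)) \<le> norm a * norm b * (L * K)" for a b
    proof -
      have "norm (f (B a b)) \<le> norm (B a b) * K"
        by (rule K)
      also have "\<dots> \<le> norm a * norm b * L * K"
        by (rule mult_right_mono[OF L K0])
      finally show ?thesis
        by (simp add: mult.assoc)
    qed
    then show "\<exists>M. \<forall>a b. norm (f (B a b)) \<le> norm a * norm b * M"
      by blast
  qed (simp_all add: B.add_left B.add_right B.scaleR_left B.scaleR_right f.add f.scale)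
qed

text \<open>The universal property only concerns scalar bilinear forms; a norming functional
transfers it to the norm of a vector-valued one.\<close>

lemma proj_tensor_pair_sum_norm_le:
  assumes t: "is_proj_tensor t" and B: "bounded_bilinear B"
    and bound: "\<And>x y. norm (B x y) \<le> K * norm x * norm y"
  shows "norm (pair_sum B ps) \<le> K * norm (pair_sum t ps)"
proof -
  obtain \<phi> where \<phi>: "linear \<phi>" "\<And>x. \<bar>\<phi> x\<bar> \<le> norm x" "\<phi> (pair_sum B ps) = norm (pair_sum B ps)"
    using hahn_banach_norming_functional[of "pair_sum B ps"] by blast
  have "bounded_linear \<phi>"
    using \<phi>(1,2) by (intro bounded_linear_intro[where K = 1]) (auto simp: linear_add linear_scale)
  then have "bounded_bilinear (\<lambda>x y. \<phi> (B x y))"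
    using B by (rule bounded_bilinear_compose_linear)
  moreover have "\<bar>\<phi> (B x y)\<bar> \<le> K * norm x * norm y" for x y
    by (rule order_trans[OF \<phi>(2) bound])
  ultimately obtain f where f: "bounded_linear f" "\<And>x y. f (t x y) = \<phi> (B x y)" "onorm f \<le> K"
    using t unfolding is_proj_tensor_def by blast
  have "norm (pair_sum B ps) = pair_sum (\<lambda>x y. \<phi> (B x y)) ps"
    by (simp only: \<phi>(3)[symmetric] linear_pair_sum[OF \<phi>(1)])
  also have "\<dots> = f (pair_sum t ps)"
    by (simp only: linear_pair_sum[OF bounded_linear.linear[OF f(1)]] f(2))
  also have "\<dots> \<le> onorm f * norm (pair_sum t ps)"
    using onorm[OF f(1), of "pair_sum t ps"] by simp
  also have "\<dots> \<le> K * norm (pair_sum t ps)"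
    using f(3) by (rule mult_right_mono) simp
  finally show ?thesis .
qed

lemma closed_Collect_dense_imp:
  assumes "closed {x. P x}" and "closure S = UNIV" and "\<And>x. x \<in> S \<Longrightarrow> P x"
  shows "P x"
  using closure_minimal[of S "{x. P x}"] assms by auto

lemma lipschitz_on_subspace_linear:
  assumes S: "subspace S"
    and add: "\<And>a b. a \<in> S \<Longrightarrow> b \<in> S \<Longrightarrow> h (a + b) = h a + h b"
    and scale: "\<And>c a. a \<in> S \<Longrightarrow> h (c *\<^sub>R a) = c *\<^sub>R h a"
    and bound: "\<And>a. a \<in> S \<Longrightarrow> norm (h a) \<le> K * norm a"
  shows "\<bar>K\<bar>-lipschitz_on S h"
proof (rule lipschitz_onI)
  fix a b assume "a \<in> S" "b \<in> S"
  then have "dist (h a) (h b) = norm (h (a - b))"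
    using add[of a "- b"] scale[of b "-1"] subspace_neg[OF S] by (simp add: dist_norm)
  also have "\<dots> \<le> K * norm (a - b)"
    by (rule bound[OF subspace_diff[OF S \<open>a \<in> S\<close> \<open>b \<in> S\<close>]])
  also have "\<dots> \<le> \<bar>K\<bar> * dist a b"
    by (simp add: dist_norm mult_right_mono)
  finally show "dist (h a) (h b) \<le> \<bar>K\<bar> * dist a b" .
qed simp

lemma bounded_linear_extension_dense:
  fixes h :: "'a::real_normed_vector \<Rightarrow> 'b::banach"
  assumes S: "subspace S" "closure S = UNIV"
    and add: "\<And>a b. a \<in> S \<Longrightarrow> b \<in> S \<Longrightarrow> h (a + b) = h a + h b"
    and scale: "\<And>c a. a \<in> S \<Longrightarrow> h (c *\<^sub>R a) = c *\<^sub>R h a"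
    and bound: "\<And>a. a \<in> S \<Longrightarrow> norm (h a) \<le> K * norm a"
  obtains E where "bounded_linear E" "\<And>a. a \<in> S \<Longrightarrow> E a = h a" "\<And>x. norm (E x) \<le> K * norm x"
proof -
  obtain E where lipschitz: "\<bar>K\<bar>-lipschitz_on (closure S) E" and E: "\<And>a. a \<in> S \<Longrightarrow> E a = h a"
    using lipschitz_extend_closure[OF lipschitz_on_subspace_linear[OF S(1) add scale bound]] by blast
  have cont: "continuous_on UNIV E"
    using lipschitz_on_continuous_on[OF lipschitz] S(2) by simp
  have cont_comp: "continuous_on UNIV (\<lambda>x. E (g x))" if "continuous_on UNIV g" for g :: "'c::topological_space \<Rightarrow> 'a"
    using continuous_on_compose2[OF cont that] by simp
  have "E (a + b) = E a + E b" for a b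
  proof -
    have "closed {p. E (fst p + snd p) = E (fst p) + E (snd p)}"
      by (intro closed_Collect_eq continuous_intros cont_comp)
    moreover have "closure (S \<times> S) = UNIV"
      using S(2) by (simp add: closure_Times)
    moreover have "E (fst p + snd p) = E (fst p) + E (snd p)" if "p \<in> S \<times> S" for p
      using that add E subspace_add[OF S(1)] by auto
    ultimately show ?thesis
      using closed_Collect_dense_imp[of "\<lambda>p. E (fst p + snd p) = E (fst p) + E (snd p)" "S \<times> S" "(a, b)"]
      by simp
  qed
  moreover have "E (c *\<^sub>R a) = c *\<^sub>R E a" for c a
  proof (rule closed_Collect_dense_imp[where P = "\<lambda>a. E (c *\<^sub>R a) = c *\<^sub>R E a", OF _ S(2)])
    show "closed {a. E (c *\<^sub>R a) = c *\<^sub>R E a}"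
      by (intro closed_Collect_eq continuous_intros cont_comp)
    show "E (c *\<^sub>R a) = c *\<^sub>R E a" if "a \<in> S" for a
      using that scale E subspace_scale[OF S(1)] by simp
  qed
  moreover have norm_E: "norm (E x) \<le> K * norm x" for x
  proof (rule closed_Collect_dense_imp[where P = "\<lambda>x. norm (E x) \<le> K * norm x", OF _ S(2)])
    show "closed {x. norm (E x) \<le> K * norm x}"
      by (intro closed_Collect_le continuous_intros cont)
    show "norm (E x) \<le> K * norm x" if "x \<in> S" for x
      using that bound E by simp
  qed
  moreover have "norm (E x) \<le> norm x * \<bar>K\<bar>" for x
    using order_trans[OF norm_E mult_right_mono[OF abs_ge_self norm_ge_zero]] by (simp add: mult.commute)
  ultimately have "bounded_linear E"
    by (intro bounded_linear_intro)
  then show thesis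
    using that E norm_E by blast
qed

lemma proj_tensor_lift:
  fixes t :: "'a::banach \<Rightarrow> 'b::banach \<Rightarrow> 's::banach" and B :: "'a \<Rightarrow> 'b \<Rightarrow> 'v::banach"
  assumes t: "is_proj_tensor t" and B: "bounded_bilinear B"
    and bound: "\<And>x y. norm (B x y) \<le> K * norm x * norm y"
  obtains E where "bounded_linear E" "\<And>x y. E (t x y) = B x y" "\<And>w. norm (E w) \<le> K * norm w"
proof -
  have t_bilinear: "bounded_bilinear t"
    using t unfolding is_proj_tensor_def by blast
  let ?neg = "map (\<lambda>(x, y). ((-1) *\<^sub>R x, y))"
  have well_defined: "pair_sum B ps = pair_sum B qs" if "pair_sum t ps = pair_sum t qs" for ps qs
    using proj_tensor_pair_sum_norm_le[OF t B bound, of "ps @ ?neg qs"] that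
    unfolding pair_sum_simps(3) pair_sum_scaleR_left[OF B] pair_sum_scaleR_left[OF t_bilinear]
    by simp
  define h where "h w = pair_sum B (SOME ps. w = pair_sum t ps)" for w
  have h: "h (pair_sum t ps) = pair_sum B ps" for ps
    unfolding h_def by (rule well_defined[symmetric], rule someI) (rule refl)
  have h_add: "h (a + b) = h a + h b" if "a \<in> range (pair_sum t)" "b \<in> range (pair_sum t)" for a b
    using that h pair_sum_simps(3)[of t] pair_sum_simps(3)[of B] by (metis rangeE)
  have h_scale: "h (c *\<^sub>R a) = c *\<^sub>R h a" if "a \<in> range (pair_sum t)" for c a
    using that h pair_sum_scaleR_left[OF t_bilinear] pair_sum_scaleR_left[OF B] by (metis rangeE)
  have h_bound: "norm (h a) \<le> K * norm a" if "a \<in> range (pair_sum t)" for a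
    using that h proj_tensor_pair_sum_norm_le[OF t B bound] by (metis rangeE)
  obtain E where E: "bounded_linear E" "\<And>w. w \<in> range (pair_sum t) \<Longrightarrow> E w = h w"
    and norm_E: "\<And>w. norm (E w) \<le> K * norm w"
    using bounded_linear_extension_dense[OF subspace_range_pair_sum[OF t_bilinear]
        proj_tensor_closure_range_pair_sum[OF t] h_add h_scale h_bound] by blast
  moreover have "E (t x y) = B x y" for x y
    using E(2)[OF rangeI, of "[(x, y)]"] h[of "[(x, y)]"] by simp
  ultimately show thesis
    using that by blast
qed

lemma proj_tensor_map:
  fixes t1 :: "'a::banach \<Rightarrow> 'b::banach \<Rightarrow> 's::banach" and t2 :: "'a \<Rightarrow> 'c::banach \<Rightarrow> 't::banach"
  assumes t1: "is_proj_tensor t1" and t2: "is_proj_tensor t2"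
    and Q: "linear Q" and Q_bound: "\<And>y. norm (Q y) \<le> K * norm y"
  obtains E where "bounded_linear E" "\<And>x y. E (t1 x y) = t2 x (Q y)" "\<And>w. norm (E w) \<le> K * norm w"
proof -
  have t2_bilinear: "bounded_bilinear t2" and t2_bound: "\<And>x z. norm (t2 x z) \<le> norm x * norm z"
    using t2 unfolding is_proj_tensor_def by blast+
  have "bounded_linear Q"
    using Q Q_bound by (intro bounded_linear_intro[where K = K]) (auto simp: linear_add linear_scale mult.commute)
  then have "bounded_bilinear (\<lambda>x y. t2 x (Q y))"
    using bounded_bilinear.comp[OF t2_bilinear bounded_linear_ident] by blast
  moreover have "norm (t2 x (Q y)) \<le> K * norm x * norm y" for x y
    using order_trans[OF t2_bound mult_left_mono[OF Q_bound norm_ge_zero]] by (simp add: ac_simps)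
  ultimately show thesis
    using that by (rule proj_tensor_lift[OF t1])
qed

lemma proj_tensor_bounded_linear_eqI:
  assumes t: "is_proj_tensor t" and F: "bounded_linear F" and G: "bounded_linear G"
    and eq: "\<And>x y. F (t x y) = G (t x y)"
  shows "F = G"
proof
  fix w
  have dense: "closure (span (range (\<lambda>(x, y). t x y))) = UNIV"
    using t unfolding is_proj_tensor_def by blast
  show "F w = G w"
  proof (rule closed_Collect_dense_imp[where P = "\<lambda>w. F w = G w", OF _ dense])
    show "closed {w. F w = G w}"
      by (intro closed_Collect_eq linear_continuous_on F G)
    show "F w = G w" if "w \<in> span (range (\<lambda>(x, y). t x y))" for w
      by (rule linear_eq_on_span[OF bounded_linear.linear[OF F] bounded_linear.linear[OF G] _ that])
        (auto simp: eq)
  qed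
qed

section \<open>Push-forward of generalised Bochner integrals\<close>

lemma simple_bochner_integral_distr:
  assumes T: "T \<in> measurable M N" and F: "simple_function N F"
  shows "Bochner_Integration.simple_bochner_integral (distr M N T) F = Bochner_Integration.simple_bochner_integral M (\<lambda>x. F (T x))"
proof -
  have measure_eq: "measure (distr M N T) {p \<in> space N. F p = y} = measure M {x \<in> space M. F (T x) = y}"
    for y
  proof -
    have "{p \<in> space N. F p = y} = F -` {y} \<inter> space N"
      by auto
    also have "\<dots> \<in> sets N"
      by (rule measurable_sets[OF measurable_simple_function[OF F]]) simp
    finally have "{p \<in> space N. F p = y} \<in> sets N" .
    moreover have "T -` {p \<in> space N. F p = y} \<inter> space M = {x \<in> space M. F (T x) = y}"
      using measurable_space[OF T] by auto
    ultimately show ?thesis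
      by (simp add: measure_distr[OF T])
  qed
  have "(\<lambda>x. F (T x)) ` space M \<subseteq> F ` space N"
    using measurable_space[OF T] by auto
  moreover have "measure M {x \<in> space M. F (T x) = y} = 0" if "y \<notin> (\<lambda>x. F (T x)) ` space M" for y
  proof -
    have empty: "{x \<in> space M. F (T x) = y} = {}"
      using that by auto
    show ?thesis
      unfolding empty by simp
  qed
  ultimately show ?thesis
    unfolding simple_bochner_integral_def space_distr measure_eq
    by (intro sum.mono_neutral_right simple_functionD(1)[OF F]) auto
qed

lemma simple_bochner_integral_dist_le:
  assumes s: "Bochner_Integration.simple_bochner_integrable M s" and t: "Bochner_Integration.simple_bochner_integrable M t"
  shows "ennreal (norm (Bochner_Integration.simple_bochner_integral M s - Bochner_Integration.simple_bochner_integral M t))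
    \<le> (\<integral>\<^sup>+x. ennreal (norm (s x - t x)) \<partial>M)"
proof -
  have integrable: "Bochner_Integration.simple_bochner_integrable M (\<lambda>x. norm (s x - t x))"
    using simple_bochner_integrable_compose2[of "\<lambda>x y. norm (x - y)" M s t] s t by simp
  have "norm (Bochner_Integration.simple_bochner_integral M s - Bochner_Integration.simple_bochner_integral M t)
      = norm (Bochner_Integration.simple_bochner_integral M (\<lambda>x. s x - t x))"
    using s t by (simp add: simple_bochner_integral_diff)
  also have "\<dots> \<le> Bochner_Integration.simple_bochner_integral M (\<lambda>x. norm (s x - t x))"
    using simple_bochner_integrable_compose2[of "(-)" M s t] s t
    by (auto intro!: simple_bochner_integral_norm_bound)
  finally have "ennreal (norm (Bochner_Integration.simple_bochner_integral M s - Bochner_Integration.simple_bochner_integral M t))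
      \<le> ennreal (Bochner_Integration.simple_bochner_integral M (\<lambda>x. norm (s x - t x)))"
    by (rule ennreal_leI)
  then show ?thesis
    using simple_bochner_integral_eq_nn_integral[OF integrable] by simp
qed

lemma nn_integral_tendsto_zero_bounded:
  fixes u :: "nat \<Rightarrow> 'a \<Rightarrow> real"
  assumes M: "finite_measure M" and u: "\<And>n. u n \<in> borel_measurable M"
    and nonneg: "\<And>n x. x \<in> space M \<Longrightarrow> 0 \<le> u n x"
    and bounded: "\<And>n x. x \<in> space M \<Longrightarrow> u n x \<le> C"
    and lim: "AE x in M. (\<lambda>n. u n x) \<longlonglongrightarrow> 0"
  shows "(\<lambda>n. \<integral>\<^sup>+x. ennreal (u n x) \<partial>M) \<longlonglongrightarrow> 0"
proof -
  have "(\<lambda>n. \<integral>\<^sup>+x. ennreal (norm (0 - u n x)) \<partial>M) \<longlonglongrightarrow> 0"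
  proof (rule nn_integral_dominated_convergence_norm[where w = "\<lambda>_. C"])
    show "AE x in M. norm (u n x) \<le> C" for n
      using nonneg bounded by (intro AE_I2) simp
    show "(\<integral>\<^sup>+x. ennreal C \<partial>M) < \<infinity>"
      using finite_measure.emeasure_finite[OF M, of "space M"]
      by (simp add: ennreal_mult_less_top less_top)
  qed (use u lim in simp_all)
  moreover have "(\<integral>\<^sup>+x. ennreal (norm (0 - u n x)) \<partial>M) = (\<integral>\<^sup>+x. ennreal (u n x) \<partial>M)" for n
    using nonneg by (intro nn_integral_cong) simp
  ultimately show ?thesis
    by simp
qed

lemma nearest_point_approx:
  fixes g :: "'a \<Rightarrow> 'v::metric_space" and e :: "nat \<Rightarrow> 'v"
  assumes g: "\<And>c. (\<lambda>p. dist (g p) c) \<in> borel_measurable N"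
  obtains F where "\<And>n. simple_function N (F n)"
    and "\<And>n. (\<lambda>p. dist (g p) (F n p)) \<in> borel_measurable N"
    and "\<And>n p. dist (g p) (F n p) \<le> dist (g p) (e 0)"
    and "\<And>p. g p \<in> closure (range e) \<Longrightarrow> (\<lambda>n. F n p) \<longlonglongrightarrow> g p"
proof -
  define K where "K n p = (LEAST k. k \<le> n \<and> (\<forall>j\<le>n. dist (g p) (e k) \<le> dist (g p) (e j)))" for n p
  have K: "K n p \<le> n \<and> (\<forall>j\<le>n. dist (g p) (e (K n p)) \<le> dist (g p) (e j))" for n p
    unfolding K_def
    by (rule LeastI[of _ "arg_min_on (\<lambda>j. dist (g p) (e j)) {..n}"])
       (auto intro: arg_min_least simp flip: atMost_iff
             intro!: arg_min_if_finite(1)[of "{..n}", simplified])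
  have K_meas: "K n \<in> measurable N (count_space UNIV)" for n
    unfolding K_def using g by measurable
  have "simple_function N (K n)" for n
    unfolding simple_function_eq_measurable
    using K_meas K by (auto intro: finite_subset[of _ "{..n}"])
  then have "simple_function N (e \<circ> K n)" for n
    by (rule simple_function_compose)
  moreover have "(\<lambda>p. dist (g p) (e (K n p))) \<in> borel_measurable N" for n
    by (rule measurable_compose_countable'[OF g K_meas]) auto
  moreover have "(\<lambda>n. e (K n p)) \<longlonglongrightarrow> g p" if p_closure: "g p \<in> closure (range e)" for p
    unfolding lim_sequentially
  proof (intro allI impI)
    fix r :: real assume "r > 0"
    then obtain k where k: "dist (e k) (g p) < r"
      using p_closure unfolding closure_approachable by force
    have "dist (e (K n p)) (g p) < r" if "k \<le> n" for n
      using K[of n p] that k by (metis dist_commute order.strict_trans1)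
    then show "\<exists>n0. \<forall>n\<ge>n0. dist (e (K n p)) (g p) < r"
      by blast
  qed
  ultimately show thesis
    using K by (intro that[of "\<lambda>n. e \<circ> K n"]) auto
qed

lemma simple_bochner_integral_distr_linear_dist_le:
  assumes M: "finite_measure M" and T: "T \<in> measurable M N" and L: "bounded_linear L"
    and F: "simple_function N F" and s: "Bochner_Integration.simple_bochner_integrable M s"
  shows "ennreal (norm (Bochner_Integration.simple_bochner_integral (distr M N T) F
      - L (Bochner_Integration.simple_bochner_integral M s)))
    \<le> (\<integral>\<^sup>+x. ennreal (norm (F (T x) - L (s x))) \<partial>M)"
proof -
  have FT: "Bochner_Integration.simple_bochner_integrable M (\<lambda>x. F (T x))"
    using simple_function_comp[OF T F] finite_measure.emeasure_finite[OF M]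
    by (intro simple_bochner_integrable.intros) (simp_all add: o_def)
  have Ls: "Bochner_Integration.simple_bochner_integrable M (\<lambda>x. L (s x))"
    using simple_bochner_integrable_compose2[where p = "\<lambda>x y. L x", OF _ s s]
      linear_0[OF bounded_linear.linear[OF L]] by simp
  have "Bochner_Integration.simple_bochner_integral (distr M N T) F - L (Bochner_Integration.simple_bochner_integral M s)
      = Bochner_Integration.simple_bochner_integral M (\<lambda>x. F (T x))
        - Bochner_Integration.simple_bochner_integral M (\<lambda>x. L (s x))"
    unfolding simple_bochner_integral_distr[OF T F]
      simple_bochner_integral_linear[OF bounded_linear.linear[OF L] s] ..
  then show ?thesis
    using simple_bochner_integral_dist_le[OF FT Ls] by simp
qed

lemma simple_bochner_integral_distr_dist_le:
  fixes f :: "'m \<Rightarrow> 's::banach" and g :: "'n \<Rightarrow> 't::banach"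
  assumes M: "finite_measure M" and T: "T \<in> measurable M N"
    and L: "bounded_linear L" and K0: "0 \<le> K" and K: "\<And>x. norm (L x) \<le> norm x * K"
    and gT: "\<And>x. x \<in> space M \<Longrightarrow> g (T x) = L (f x)"
    and F: "simple_function N F" and F_meas: "(\<lambda>p. norm (g p - F p)) \<in> borel_measurable N"
    and s: "Bochner_Integration.simple_bochner_integrable M s"
    and s_meas: "(\<lambda>x. norm (f x - s x)) \<in> borel_measurable M"
  shows "ennreal (norm (Bochner_Integration.simple_bochner_integral (distr M N T) F
      - L (Bochner_Integration.simple_bochner_integral M s)))
    \<le> (\<integral>\<^sup>+p. ennreal (norm (g p - F p)) \<partial>distr M N T) + ennreal K * (\<integral>\<^sup>+x. ennreal (norm (f x - s x)) \<partial>M)"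
proof -
  have "ennreal (norm (Bochner_Integration.simple_bochner_integral (distr M N T) F
      - L (Bochner_Integration.simple_bochner_integral M s)))
      \<le> (\<integral>\<^sup>+x. ennreal (norm (F (T x) - L (s x))) \<partial>M)"
    by (rule simple_bochner_integral_distr_linear_dist_le[OF M T L F s])
  also have "\<dots> \<le> (\<integral>\<^sup>+x. ennreal (norm (g (T x) - F (T x))) + ennreal K * ennreal (norm (f x - s x)) \<partial>M)"
  proof (rule nn_integral_mono)
    fix x assume "x \<in> space M"
    then have split: "F (T x) - L (s x) = - (g (T x) - F (T x)) + L (f x - s x)"
      using gT linear_diff[OF bounded_linear.linear[OF L]] by simp
    have "norm (F (T x) - L (s x)) \<le> norm (- (g (T x) - F (T x))) + norm (L (f x - s x))"
      unfolding split by (rule norm_triangle_ineq)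
    also have "\<dots> \<le> norm (g (T x) - F (T x)) + K * norm (f x - s x)"
      using K[of "f x - s x"] by (simp add: mult.commute norm_minus_commute)
    finally have "ennreal (norm (F (T x) - L (s x))) \<le> ennreal (norm (g (T x) - F (T x)) + K * norm (f x - s x))"
      by (rule ennreal_leI)
    then show "ennreal (norm (F (T x) - L (s x)))
        \<le> ennreal (norm (g (T x) - F (T x))) + ennreal K * ennreal (norm (f x - s x))"
      using K0 by (simp add: ennreal_mult)
  qed
  also have "\<dots> = (\<integral>\<^sup>+x. ennreal (norm (g (T x) - F (T x))) \<partial>M)
      + ennreal K * (\<integral>\<^sup>+x. ennreal (norm (f x - s x)) \<partial>M)"
    using measurable_comp[OF T F_meas] s_meas
    by (simp add: nn_integral_add nn_integral_cmult o_def)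
  also have "(\<integral>\<^sup>+x. ennreal (norm (g (T x) - F (T x))) \<partial>M)
      = (\<integral>\<^sup>+p. ennreal (norm (g p - F p)) \<partial>distr M N T)"
    using F_meas by (simp add: nn_integral_distr[OF T])
  finally show ?thesis .
qed

lemma simple_integrals_distr_tendsto:
  fixes f :: "'m \<Rightarrow> 's::banach" and g :: "'n \<Rightarrow> 't::banach"
  assumes M: "finite_measure M" and T: "T \<in> measurable M N"
    and f: "gen_has_bochner_integral M f v" and L: "bounded_linear L"
    and gT: "\<And>x. x \<in> space M \<Longrightarrow> g (T x) = L (f x)"
    and F: "\<And>n. simple_function N (F n)"
    and F_meas: "\<And>n. (\<lambda>p. norm (g p - F n p)) \<in> borel_measurable N"
    and F_L1: "(\<lambda>n. \<integral>\<^sup>+p. ennreal (norm (g p - F n p)) \<partial>distr M N T) \<longlonglongrightarrow> 0"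
  shows "(\<lambda>n. Bochner_Integration.simple_bochner_integral (distr M N T) (F n)) \<longlonglongrightarrow> L v"
proof -
  obtain s where s: "\<And>i. Bochner_Integration.simple_bochner_integrable M (s i)"
    and s_meas: "\<And>i. (\<lambda>x. norm (f x - s i x)) \<in> borel_measurable M"
    and s_L1: "(\<lambda>i. \<integral>\<^sup>+x. ennreal (norm (f x - s i x)) \<partial>M) \<longlonglongrightarrow> 0"
    and s_lim: "(\<lambda>i. Bochner_Integration.simple_bochner_integral M (s i)) \<longlonglongrightarrow> v"
    using f unfolding gen_has_bochner_integral_def by blast
  obtain K where K0: "0 \<le> K" and K: "\<And>x. norm (L x) \<le> norm x * K"
    using bounded_linear.nonneg_bounded[OF L] by blast
  define err where "err n = norm (Bochner_Integration.simple_bochner_integral (distr M N T) (F n)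
    - L (Bochner_Integration.simple_bochner_integral M (s n)))" for n
  have bound_lim: "(\<lambda>n. (\<integral>\<^sup>+p. ennreal (norm (g p - F n p)) \<partial>distr M N T)
      + ennreal K * (\<integral>\<^sup>+x. ennreal (norm (f x - s n x)) \<partial>M)) \<longlonglongrightarrow> 0"
    using tendsto_add[OF F_L1 ennreal_tendsto_cmult[OF _ s_L1]] by simp
  have err_le: "ennreal (err n) \<le> (\<integral>\<^sup>+p. ennreal (norm (g p - F n p)) \<partial>distr M N T)
      + ennreal K * (\<integral>\<^sup>+x. ennreal (norm (f x - s n x)) \<partial>M)" for n
    unfolding err_def by (rule simple_bochner_integral_distr_dist_le[OF M T L K0 K gT F F_meas s s_meas])
  have "(\<lambda>n. ennreal (err n)) \<longlonglongrightarrow> 0"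
    by (rule tendsto_sandwich[OF _ _ tendsto_const bound_lim]) (simp_all add: err_le)
  then have "(\<lambda>n. ennreal (err n)) \<longlonglongrightarrow> ennreal 0"
    by simp
  then have "err \<longlonglongrightarrow> 0"
    by (rule tendsto_ennrealD) (simp_all add: err_def)
  then have "(\<lambda>n. Bochner_Integration.simple_bochner_integral (distr M N T) (F n)
      - L (Bochner_Integration.simple_bochner_integral M (s n))) \<longlonglongrightarrow> 0"
    unfolding err_def by (rule tendsto_norm_zero_cancel)
  then show ?thesis
    by (rule Lim_transform[OF bounded_linear.tendsto[OF L s_lim]])
qed

text \<open>Unlike the library's measurability rules for dist, this needs no second countability.\<close>

lemma borel_measurable_dist_const:
  assumes "g \<in> borel_measurable N"
  shows "(\<lambda>p. dist (g p) c) \<in> borel_measurable N"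
proof -
  have "(\<lambda>y. dist y c) \<in> borel_measurable borel"
    by (intro borel_measurable_continuous_onI continuous_intros)
  then show ?thesis
    using measurable_comp[OF assms] by (simp add: o_def)
qed

lemma AE_distr_in_closed:
  assumes T: "T \<in> measurable M N" and g: "g \<in> borel_measurable N" and C: "closed C"
    and ae: "AE x in M. g (T x) \<in> C"
  shows "AE p in distr M N T. g p \<in> C"
proof -
  have "g -` C \<inter> space N \<in> sets N"
    by (rule measurable_sets[OF g borel_closed[OF C]])
  then have "{p \<in> space N. g p \<in> C} \<in> sets N"
    by (simp add: vimage_def Int_def conj_commute)
  then show ?thesis
    using ae by (simp add: AE_distr_iff[OF T])
qed

lemma distr_simple_approx:
  fixes g :: "'n \<Rightarrow> 't::banach"
  assumes M: "finite_measure M" and T: "T \<in> measurable M N"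
    and g: "g \<in> borel_measurable N" and g_bounded: "\<And>p. p \<in> space N \<Longrightarrow> norm (g p) \<le> C"
    and D: "countable D" and g_ae: "AE x in M. g (T x) \<in> closure D"
  obtains F where "\<And>n. simple_function N (F n)"
    and "\<And>n. (\<lambda>p. norm (g p - F n p)) \<in> borel_measurable N"
    and "AE p in distr M N T. (\<lambda>n. F n p) \<longlonglongrightarrow> g p"
    and "(\<lambda>n. \<integral>\<^sup>+p. ennreal (norm (g p - F n p)) \<partial>distr M N T) \<longlonglongrightarrow> 0"
proof -
  obtain e :: "nat \<Rightarrow> 't" where e: "range e = insert 0 D"
    using range_from_nat_into[of "insert 0 D"] D by blast
  obtain F where F: "\<And>n. simple_function N (F n)"
    and F_meas: "\<And>n. (\<lambda>p. dist (g p) (F n p)) \<in> borel_measurable N"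
    and F_bound: "\<And>n p. dist (g p) (F n p) \<le> dist (g p) (e 0)"
    and F_lim: "\<And>p. g p \<in> closure (range e) \<Longrightarrow> (\<lambda>n. F n p) \<longlonglongrightarrow> g p"
    using nearest_point_approx[OF borel_measurable_dist_const[OF g], of e] by blast
  have closure_sub: "closure D \<subseteq> closure (range e)"
    using e by (intro closure_mono) auto
  have "AE x in M. g (T x) \<in> closure (range e)"
    using g_ae by eventually_elim (use closure_sub in blast)
  then have "AE p in distr M N T. g p \<in> closure (range e)"
    by (rule AE_distr_in_closed[OF T g closed_closure])
  then have F_ae: "AE p in distr M N T. (\<lambda>n. F n p) \<longlonglongrightarrow> g p"
    by eventually_elim (rule F_lim)
  have F_norm_meas: "(\<lambda>p. norm (g p - F n p)) \<in> borel_measurable N" for n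
    using F_meas[of n] by (simp add: dist_norm)
  have "(\<lambda>n. \<integral>\<^sup>+p. ennreal (norm (g p - F n p)) \<partial>distr M N T) \<longlonglongrightarrow> 0"
  proof (rule nn_integral_tendsto_zero_bounded)
    show "finite_measure (distr M N T)"
      by (rule finite_measure.finite_measure_distr[OF M T])
    show "norm (g p - F n p) \<le> C + norm (e 0)" if "p \<in> space (distr M N T)" for n p
      using F_bound[of p n] g_bounded[of p] that norm_triangle_ineq4[of "g p" "e 0"]
      by (simp add: dist_norm)
    show "AE p in distr M N T. (\<lambda>n. norm (g p - F n p)) \<longlonglongrightarrow> 0"
      using F_ae
    proof eventually_elim
      case (elim p)
      then have "(\<lambda>n. norm (F n p - g p)) \<longlonglongrightarrow> 0"
        by (intro tendsto_norm_zero LIM_zero)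
      then show ?case
        by (simp add: norm_minus_commute)
    qed
  qed (use F_norm_meas in simp_all)
  with F F_norm_meas F_ae show thesis
    by (rule that)
qed

lemma gen_has_bochner_integral_distr:
  fixes f :: "'m \<Rightarrow> 's::banach" and g :: "'n \<Rightarrow> 't::banach"
  assumes M: "finite_measure M" and T: "T \<in> measurable M N"
    and f: "gen_has_bochner_integral M f v" and L: "bounded_linear L"
    and gT: "\<And>x. x \<in> space M \<Longrightarrow> g (T x) = L (f x)"
    and g: "g \<in> borel_measurable N" and g_bounded: "\<And>p. p \<in> space N \<Longrightarrow> norm (g p) \<le> C"
  shows "gen_has_bochner_integral (distr M N T) g (L v)"
proof -
  obtain s where s: "\<And>i. Bochner_Integration.simple_bochner_integrable M (s i)"
    and s_lim: "AE x in M. (\<lambda>i. s i x) \<longlonglongrightarrow> f x"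
    using f unfolding gen_has_bochner_integral_def by blast
  txt \<open>The s i cannot be transported along T; new simple functions on N are built from
    the countably many values of L \<circ> s i instead.\<close>
  define D where "D = (\<Union>i. L ` s i ` space M)"
  have "finite (s i ` space M)" for i
    using s[of i] by (auto elim: simple_bochner_integrable.cases simp: simple_function_def)
  then have "countable (L ` s i ` space M)" for i
    by (simp add: countable_finite)
  then have D_countable: "countable D"
    unfolding D_def by blast
  have D_ae: "AE x in M. g (T x) \<in> closure D"
    using s_lim AE_space
  proof eventually_elim
    case (elim x)
    then have "(\<lambda>i. L (s i x)) \<longlonglongrightarrow> g (T x)"
      using gT bounded_linear.tendsto[OF L] by simp
    moreover have "L (s i x) \<in> D" for i
      using elim unfolding D_def by blast
    ultimately show ?case
      unfolding closure_sequential by (intro exI[of _ "\<lambda>i. L (s i x)"]) simp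
  qed
  obtain F where F: "\<And>n. simple_function N (F n)"
    and F_meas: "\<And>n. (\<lambda>p. norm (g p - F n p)) \<in> borel_measurable N"
    and F_ae: "AE p in distr M N T. (\<lambda>n. F n p) \<longlonglongrightarrow> g p"
    and F_L1: "(\<lambda>n. \<integral>\<^sup>+p. ennreal (norm (g p - F n p)) \<partial>distr M N T) \<longlonglongrightarrow> 0"
    using distr_simple_approx[OF M T g g_bounded D_countable D_ae] by blast
  have "Bochner_Integration.simple_bochner_integrable (distr M N T) (F n)" for n
    using F[of n] finite_measure.emeasure_finite[OF finite_measure.finite_measure_distr[OF M T]]
    by (intro simple_bochner_integrable.intros)
       (simp_all add: simple_function_cong_algebra[of "distr M N T" N])
  moreover have "(\<lambda>n. Bochner_Integration.simple_bochner_integral (distr M N T) (F n)) \<longlonglongrightarrow> L v"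
    by (rule simple_integrals_distr_tendsto[OF M T f L gT F F_meas F_L1])
  ultimately show ?thesis
    unfolding gen_has_bochner_integral_def using F_ae F_meas F_L1 by (intro exI[of _ F]) simp
qed

section \<open>Integral norm-attaining tensors\<close>

lemma measurable_restrict_cball_map_snd:
  fixes Q :: "'b::real_normed_vector \<Rightarrow> 'c::real_normed_vector"
  assumes Q: "bounded_linear Q" and Q_contraction: "\<And>y. norm (Q y) \<le> norm y"
  shows "(\<lambda>p :: 'a::real_normed_vector \<times> 'b. (fst p, Q (snd p)))
    \<in> measurable (restrict_space borel (cball 0 1 \<times> cball 0 1)) (restrict_space borel (cball 0 1 \<times> cball 0 1))"
proof (rule measurable_restrict_space3)
  have "continuous_on UNIV (\<lambda>p :: 'a \<times> 'b. (fst p, Q (snd p)))"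
    by (intro continuous_on_Pair continuous_on_fst continuous_on_snd continuous_on_id
        bounded_linear.continuous_on[OF Q])
  then show "(\<lambda>p :: 'a \<times> 'b. (fst p, Q (snd p))) \<in> borel_measurable borel"
    by (rule borel_measurable_continuous_onI)
  show "(\<lambda>p. (fst p, Q (snd p))) \<in> cball 0 1 \<times> cball 0 1 \<rightarrow> cball 0 1 \<times> cball 0 1"
    using order_trans[OF Q_contraction] by auto
qed

lemma borel_measurable_restrict_bilinear:
  assumes "bounded_bilinear t"
  shows "(\<lambda>(x, z). t x z) \<in> borel_measurable (restrict_space borel A)"
proof -
  have "continuous_on UNIV (\<lambda>p. t (fst p) (snd p))"
    by (intro bounded_bilinear.continuous_on[OF assms] continuous_intros)
  then have "continuous_on A (\<lambda>(x, z). t x z)"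
    unfolding case_prod_beta' by (rule continuous_on_subset) simp
  then show ?thesis
    by (rule borel_measurable_continuous_on_restrict)
qed

lemma bounded_bilinear_bounded_on_unit_balls:
  assumes "bounded_bilinear t"
  obtains K where "\<And>x z. norm x \<le> 1 \<Longrightarrow> norm z \<le> 1 \<Longrightarrow> norm (t x z) \<le> K"
proof -
  obtain K where K0: "K \<ge> 0" and K: "\<And>x z. norm (t x z) \<le> norm x * norm z * K"
    using bounded_bilinear.nonneg_bounded[OF assms] by blast
  have "norm (t x z) \<le> K" if "norm x \<le> 1" "norm z \<le> 1" for x z
  proof -
    have "norm x * norm z * K \<le> 1 * 1 * K"
      using that K0 by (intro mult_right_mono mult_mono) auto
    then show ?thesis
      using K[of x z] by simp
  qed
  then show thesis
    by (rule that)
qed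

lemma INA_pi_tensor_map:
  fixes t1 :: "'a::banach \<Rightarrow> 'b::banach \<Rightarrow> 's::banach" and t2 :: "'a \<Rightarrow> 'c::banach \<Rightarrow> 't::banach"
  assumes v: "INA_pi t1 v" and t2: "bounded_bilinear t2"
    and Q: "bounded_linear Q" and Q_contraction: "\<And>y. norm (Q y) \<le> norm y"
    and E: "bounded_linear E" and E_tensor: "\<And>x y. E (t1 x y) = t2 x (Q y)"
    and E_norm: "norm (E v) = norm v"
  shows "INA_pi t2 (E v)"
proof -
  obtain \<mu> :: "('a \<times> 'b) measure" where \<mu>_space: "space \<mu> = cball 0 1 \<times> cball 0 1"
    and \<mu>_sets: "sets \<mu> = sets (restrict_space borel (cball 0 1 \<times> cball 0 1))"
    and \<mu>_finite: "finite_measure \<mu>"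
    and \<mu>_integral: "gen_has_bochner_integral \<mu> (\<lambda>(x, y). t1 x y) v"
    and \<mu>_norm: "measure \<mu> (space \<mu>) = norm v"
    using v unfolding INA_pi_def by blast
  define N :: "('a \<times> 'c) measure" where "N = restrict_space borel (cball 0 1 \<times> cball 0 1)"
  define T :: "'a \<times> 'b \<Rightarrow> 'a \<times> 'c" where "T p = (fst p, Q (snd p))" for p
  have T: "T \<in> measurable \<mu> N"
    unfolding measurable_cong_sets[OF \<mu>_sets refl] N_def T_def
    by (rule measurable_restrict_cball_map_snd[OF Q Q_contraction])
  obtain K where K: "\<And>x z. norm x \<le> 1 \<Longrightarrow> norm z \<le> 1 \<Longrightarrow> norm (t2 x z) \<le> K"
    using bounded_bilinear_bounded_on_unit_balls[OF t2] by blast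
  have integral: "gen_has_bochner_integral (distr \<mu> N T) (\<lambda>(x, z). t2 x z) (E v)"
  proof (rule gen_has_bochner_integral_distr[OF \<mu>_finite T \<mu>_integral E])
    show "(\<lambda>(x, z). t2 x z) (T p) = E ((\<lambda>(x, y). t1 x y) p)" for p
      by (cases p) (simp add: T_def E_tensor)
    show "(\<lambda>(x, z). t2 x z) \<in> borel_measurable N"
      unfolding N_def by (rule borel_measurable_restrict_bilinear[OF t2])
    show "norm ((\<lambda>(x, z). t2 x z) p) \<le> K" if "p \<in> space N" for p
      using that K by (auto simp: N_def space_restrict_space)
  qed
  have "T -` space N \<inter> space \<mu> = space \<mu>"
    using measurable_space[OF T] by auto
  then have measure: "measure (distr \<mu> N T) (space (distr \<mu> N T)) = norm (E v)"
    using \<mu>_norm E_norm by (simp add: measure_distr[OF T])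
  have space: "space (distr \<mu> N T) = cball 0 1 \<times> cball 0 1"
    by (simp add: N_def space_restrict_space)
  have sets: "sets (distr \<mu> N T) = sets (restrict_space borel (cball 0 1 \<times> cball (0::'c) 1))"
    by (simp add: N_def)
  have finite: "finite_measure (distr \<mu> N T)"
    by (rule finite_measure.finite_measure_distr[OF \<mu>_finite T])
  show ?thesis
    unfolding INA_pi_def by (intro exI[of _ "distr \<mu> N T"] conjI integral measure space sets finite)
qed

theorem corollary2p10:
  fixes tXY :: "'a::banach \<Rightarrow> 'b::banach \<Rightarrow> 's::banach"
    and tXZ :: "'a \<Rightarrow> 'c::banach \<Rightarrow> 't::banach"
    and J :: "'c \<Rightarrow> 'b" and P :: "'b \<Rightarrow> 'c"
  assumes "is_proj_tensor tXY"
    and "is_proj_tensor tXZ"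
    and "linear J" and "\<forall>z. norm (J z) = norm z"
    and "bounded_linear P" and "\<forall>z. P (J z) = z" and "onorm P = 1"
    and "\<forall>u. INA_pi tXY u"
  shows "\<forall>u. INA_pi tXZ u"
proof
  fix u :: 't
  have P_contraction: "norm (P y) \<le> norm y" for y
    using onorm[OF assms(5), of y] assms(7) by simp
  obtain Pt where Pt: "bounded_linear Pt" "\<And>x y. Pt (tXY x y) = tXZ x (P y)" "\<And>w. norm (Pt w) \<le> norm w"
    using proj_tensor_map[OF assms(1,2) bounded_linear.linear[OF assms(5)], of 1] P_contraction by auto
  obtain Jt where Jt: "bounded_linear Jt" "\<And>x z. Jt (tXZ x z) = tXY x (J z)" "\<And>w. norm (Jt w) \<le> norm w"
    using proj_tensor_map[OF assms(2,1,3), of 1] assms(4) by auto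
  have "(\<lambda>w. Pt (Jt w)) = (\<lambda>w. w)"
    by (rule proj_tensor_bounded_linear_eqI[OF assms(2) bounded_linear_compose[OF Pt(1) Jt(1)] bounded_linear_ident])
      (simp add: Pt(2) Jt(2) assms(6))
  then have u: "Pt (Jt u) = u"
    by (rule fun_cong)
  have tXZ_bilinear: "bounded_bilinear tXZ"
    using assms(2) unfolding is_proj_tensor_def by blast
  have "norm (Pt (Jt u)) = norm (Jt u)"
    using Pt(3)[of "Jt u"] Jt(3)[of u] u by simp
  then have "INA_pi tXZ (Pt (Jt u))"
    by (rule INA_pi_tensor_map[OF assms(8)[rule_format] tXZ_bilinear assms(5) P_contraction Pt(1,2)])
  then show "INA_pi tXZ u"
    unfolding u .
qed

end
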